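(* Let $p>2$ be a prime which is not a Wieferich prime, and let $n$ be a positive integer not divisible by $p$. Then $P(p^2,n)=pP(p,n)$ and $P(p^3,n)=p^2P(p,n)$.
   Context: For positive integers $m,n$, let $\mathbf{Z}_m$ be the integers modulo $m$ and $T:\mathbf{Z}_m^n\to\mathbf{Z}_m^n$, $T(a_0,\dots,a_{n-1})=(a_0+a_1,a_1+a_2,\dots,a_{n-1}+a_0)$. For $\mathbf{a}\in\mathbf{Z}_m^n$ the cycle length of $(T^k\mathbf{a})_{k\ge0}$ is the smallest positive integer $P$ such that there is $N$ with $T^{k+P}\mathbf{a}=T^k\mathbf{a}$ for all $k\ge N$. $P(m,n)$ denotes the maximum of these cycle lengths over all $\mathbf{a}\in\mathbf{Z}_m^n$. A prime $p$ is a Wieferich prime if $2^{p-1}\equiv1\pmod{p^2}$. *)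

theory Defs
  imports "HOL-Number_Theory.Number_Theory"
begin

text \<open>Elements of Z_m^n are represented as functions nat => nat whose
  entries at indices i < n lie in {0..<m} and which vanish at indices >= n.\<close>

definition zvecs :: "nat \<Rightarrow> nat \<Rightarrow> (nat \<Rightarrow> nat) set" where
  "zvecs m n = {a. (\<forall>i<n. a i < m) \<and> (\<forall>i\<ge>n. a i = 0)}"

definition Tmap :: "nat \<Rightarrow> nat \<Rightarrow> (nat \<Rightarrow> nat) \<Rightarrow> (nat \<Rightarrow> nat)" where
  "Tmap m n a = (\<lambda>i. if i < n then (a i + a ((i + 1) mod n)) mod m else 0)"

definition cycle_length :: "nat \<Rightarrow> nat \<Rightarrow> (nat \<Rightarrow> nat) \<Rightarrow> nat" where
  "cycle_length m n a =
     (LEAST P. 0 < P \<and> (\<exists>N. \<forall>k\<ge>N. (Tmap m n ^^ (k + P)) a = (Tmap m n ^^ k) a))"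

definition Pmax :: "nat \<Rightarrow> nat \<Rightarrow> nat" where
  "Pmax m n = Max (cycle_length m n ` zvecs m n)"

definition wieferich :: "nat \<Rightarrow> bool" where
  "wieferich p \<longleftrightarrow> prime p \<and> [2 ^ (p - 1) = 1] (mod p ^ 2)"

end

theory Submission
  imports Defs
begin

(* Over the integers T acts as 1 + S with S the cyclic shift, and P(m,n) is the least
   eventual period of the powers of T modulo m: every orbit is periodic with that period,
   and the orbit of the unit vector e_0 determines all others by linearity and shift
   invariance. Modulo p, T^(p^phi(n)) = 1 + S^(p^phi(n)) = T, so P(p,n) is prime to p.
   If T^a = T^b modulo p^j (j >= 1) then T^(pa) = T^(pb) modulo p^(j+1); hence passing from
   p^j to p^(j+1) multiplies the least period by 1 or by p. As T doubles constant vectors,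
   a period Q modulo p^(j+1) forces 2^Q = 1 modulo p^(j+1). For p not Wieferich and
   Q = P(p,n) prime to p this fails modulo p^2, and for Q = p P(p,n) it fails modulo p^3,
   because 2^(p-1) = 1 + pu with u prime to p gives 2^(p(p-1)) = 1 + p^2 u modulo p^3. *)

lemma one_plus_mult_power_cong:
  fixes p u :: int
  shows "[(1 + p * u) ^ k = 1 + int k * p * u + int (k choose 2) * p ^ 2 * u ^ 2] (mod p ^ 3)"
proof (induction k)
  case 0
  show ?case by (simp add: binomial_eq_0)
next
  case (Suc k)
  have choose_Suc: "int (Suc k choose 2) = int (k choose 2) + int k"
    by (simp add: numeral_2_eq_2)
  have "[(1 + p * u) ^ Suc k = (1 + p * u) * (1 + int k * p * u + int (k choose 2) * p ^ 2 * u ^ 2)] (mod p ^ 3)"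
    using Suc.IH by (simp add: cong_mult)
  also have "(1 + p * u) * (1 + int k * p * u + int (k choose 2) * p ^ 2 * u ^ 2)
      = 1 + int (Suc k) * p * u + int (Suc k choose 2) * p ^ 2 * u ^ 2 + p ^ 3 * (int (k choose 2) * u ^ 3)"
    unfolding choose_Suc by (simp add: algebra_simps power2_eq_square power3_eq_cube)
  also have "[\<dots> = 1 + int (Suc k) * p * u + int (Suc k choose 2) * p ^ 2 * u ^ 2] (mod p ^ 3)"
    by (simp add: cong_add_lcancel_0 cong_mult_self_left)
  finally show ?case .
qed

lemma power_not_cong_one_mod_cube:
  fixes a p :: nat
  assumes "odd p" and "[a = 1] (mod p)" and "\<not> [a = 1] (mod p ^ 2)"
  shows "\<not> [a ^ p = 1] (mod p ^ 3)"
proof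
  assume "[a ^ p = 1] (mod p ^ 3)"
  then have cube: "[int a ^ p = 1] (mod int p ^ 3)"
    by (metis cong_int_iff of_nat_1 of_nat_power)
  obtain u where a: "int a = 1 + int p * u"
    using assms(2) unfolding cong_int_iff[symmetric] cong_iff_dvd_diff
    by (metis dvdE diff_eq_eq add.commute of_nat_1)
  obtain q where q: "p = 2 * q + 1"
    using \<open>odd p\<close> by (metis oddE)
  have choose: "int (p choose 2) * int p ^ 2 * u ^ 2 = int p ^ 3 * (int q * u ^ 2)"
    by (simp add: choose_two q power2_eq_square power3_eq_cube algebra_simps)
  have "[int a ^ p = 1 + int p ^ 2 * u + int p ^ 3 * (int q * u ^ 2)] (mod int p ^ 3)"
    using one_plus_mult_power_cong[of "int p" u p] unfolding a choose
    by (simp add: power2_eq_square)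
  also have "[1 + int p ^ 2 * u + int p ^ 3 * (int q * u ^ 2) = 1 + int p ^ 2 * u] (mod int p ^ 3)"
    by (simp add: cong_add_lcancel_0 cong_mult_self_left)
  finally have "[1 + int p ^ 2 * u = 1] (mod int p ^ 3)"
    using cube by (metis cong_sym cong_trans)
  then have "int p dvd u"
    using odd_pos[OF \<open>odd p\<close>] by (simp add: cong_add_lcancel_0 cong_0_iff power2_eq_square power3_eq_cube)
  then have "[int a = 1] (mod int (p ^ 2))"
    using a by (auto simp: cong_iff_dvd_diff power2_eq_square)
  then show False
    using assms(3) by (metis cong_int_iff of_nat_1)
qed

(* The order of a modulo p^k divides gcd (p^e Q) (p^(k-1) (p-1)), which divides p^e (p-1). *)
lemma cong_one_coprime_exponent_reduce:
  fixes a p e k Q :: nat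
  assumes "prime p" "coprime a p" "\<not> p dvd Q" and "[a ^ (p ^ e * Q) = 1] (mod p ^ k)"
  shows "[a ^ (p ^ e * (p - 1)) = 1] (mod p ^ k)"
proof (cases "k = 0")
  case False
  define X where "X = p ^ (k - 1) * (p - 1)"
  have "[a ^ X = 1] (mod p ^ k)"
    using euler_theorem[of a "p ^ k"] assms(1,2) False by (simp add: totient_prime_power X_def)
  then have "ord (p ^ k) a dvd p ^ e * X"
    by (simp add: ord_divides')
  moreover have "ord (p ^ k) a dvd p ^ e * Q"
    using assms(4) by (simp add: ord_divides')
  ultimately have "ord (p ^ k) a dvd p ^ e * gcd Q X"
    by (simp add: gcd_mult_distrib_nat)
  moreover have "coprime (gcd Q X) (p ^ (k - 1))"
    using assms(1,3) by (meson coprime_commute coprime_power_right_iff dvd_trans gcd_dvd1 prime_imp_coprime)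
  then have "gcd Q X dvd p - 1"
    by (metis X_def coprime_dvd_mult_right_iff gcd_dvd2 mult.commute)
  ultimately show ?thesis
    unfolding ord_divides by (meson dvd_trans mult_dvd_mono dvd_refl)
qed simp

lemma non_wieferich_two_power_not_cong_one:
  fixes p e Q :: nat
  assumes "prime p" "odd p" "\<not> wieferich p" "\<not> p dvd Q" "e \<le> 1"
  shows "\<not> [2 ^ (p ^ e * Q) = 1] (mod p ^ (e + 2))"
proof
  assume "[2 ^ (p ^ e * Q) = 1] (mod p ^ (e + 2))"
  then have reduced: "[2 ^ (p ^ e * (p - 1)) = 1] (mod p ^ (e + 2))"
    using assms(1,2,4) by (intro cong_one_coprime_exponent_reduce) simp_all
  have not_sq: "\<not> [2 ^ (p - 1) = 1] (mod p ^ 2)"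
    using assms(1,3) by (simp add: wieferich_def)
  show False
  proof (cases "e = 0")
    case True
    then show False
      using reduced not_sq by (simp add: power2_eq_square)
  next
    case False
    with \<open>e \<le> 1\<close> have "e = 1"
      by simp
    have "[2 ^ (p - 1) = 1] (mod p)"
      using euler_theorem[of 2 p] totient_prime[OF assms(1)] assms(2) by simp
    then have "\<not> [(2 ^ (p - 1)) ^ p = 1] (mod p ^ 3)"
      using power_not_cong_one_mod_cube assms(2) not_sq by blast
    moreover have "[(2 ^ (p - 1)) ^ p = 1] (mod p ^ 3)"
      using reduced \<open>e = 1\<close> by (simp add: mult.commute power3_eq_cube flip: power_mult)
    ultimately show False
      by contradiction
  qed
qed

lemma prime_dvd_choose_prime_power:
  assumes "prime p" "0 < r" "r < p ^ f"
  shows "p dvd (p ^ f choose r)"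
proof (rule ccontr)
  assume "\<not> p dvd (p ^ f choose r)"
  then have "coprime (p ^ f) (p ^ f choose r)"
    using prime_imp_coprime[OF \<open>prime p\<close>] by simp
  moreover have "p ^ f dvd r * (p ^ f choose r)"
    using times_binomial_minus1_eq[OF \<open>0 < r\<close>, of "p ^ f"] by simp
  ultimately have "p ^ f dvd r"
    using coprime_dvd_mult_left_iff by blast
  then show False
    using assms(2,3) by (auto dest: dvd_imp_le)
qed

(* T without the reduction modulo m. Entries at indices >= n are junk and never influence
   those below n (Tint_pow_eq_on). *)
definition Tint :: "nat \<Rightarrow> (nat \<Rightarrow> int) \<Rightarrow> nat \<Rightarrow> int" where
  "Tint n v = (\<lambda>i. v i + v ((i + 1) mod n))"

definition vcong :: "nat \<Rightarrow> nat \<Rightarrow> (nat \<Rightarrow> int) \<Rightarrow> (nat \<Rightarrow> int) \<Rightarrow> bool" where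
  "vcong n m v w \<longleftrightarrow> (\<forall>i<n. [v i = w i] (mod int m))"

lemma vcong_refl [simp]: "vcong n m v v"
  by (simp add: vcong_def)

lemma vcong_sym: "vcong n m v w \<Longrightarrow> vcong n m w v"
  by (simp add: vcong_def cong_sym)

lemma vcong_trans [trans]: "vcong n m u v \<Longrightarrow> vcong n m v w \<Longrightarrow> vcong n m u w"
  unfolding vcong_def by (meson cong_trans)

lemma vcong_dvd_modulus: "vcong n m v w \<Longrightarrow> d dvd m \<Longrightarrow> vcong n d v w"
  unfolding vcong_def by (meson cong_dvd_modulus of_nat_dvd_iff)

lemma Tint_pow_pow [simp]: "(Tint n ^^ a) ((Tint n ^^ b) v) = (Tint n ^^ (a + b)) v"
  by (simp add: funpow_add)

lemma Tint_pow_vcong: "vcong n m v w \<Longrightarrow> vcong n m ((Tint n ^^ k) v) ((Tint n ^^ k) w)"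
proof (induction k)
  case (Suc k)
  then show ?case
    unfolding vcong_def by (simp add: Tint_def cong_add)
qed simp

lemma Tint_pow_eq_on:
  "(\<forall>j<n. v j = w j) \<Longrightarrow> i < n \<Longrightarrow> (Tint n ^^ k) v i = (Tint n ^^ k) w i"
  using Tint_pow_vcong[of n 0 v w k] by (simp add: vcong_def)

lemma Tint_pow_sum:
  "(Tint n ^^ k) (\<lambda>i. \<Sum>l\<in>L. f l i) = (\<lambda>i. \<Sum>l\<in>L. (Tint n ^^ k) (f l) i)"
  by (induction k) (simp_all add: Tint_def sum.distrib)

lemma Tint_pow_scale: "(Tint n ^^ k) (\<lambda>i. c * v i) = (\<lambda>i. c * (Tint n ^^ k) v i)"
  by (induction k) (simp_all add: Tint_def distrib_left)

lemma Tint_pow_const: "(Tint n ^^ k) (\<lambda>_. c) = (\<lambda>_. 2 ^ k * c)"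
  by (induction k) (simp_all add: Tint_def mult_ac)

lemma Tint_pow_rotate:
  "i < n \<Longrightarrow> (Tint n ^^ k) (\<lambda>j. v ((j + r) mod n)) i = (Tint n ^^ k) v ((i + r) mod n)"
proof (induction k arbitrary: i)
  case (Suc k)
  have "((i + 1) mod n + r) mod n = ((i + r) mod n + 1) mod n"
    by (simp add: mod_simps)
  then show ?case
    using Suc by (simp add: Tint_def)
qed simp

lemma sum_choose_Suc:
  fixes y :: "nat \<Rightarrow> 'a::comm_semiring_1"
  shows "(\<Sum>r\<le>Suc k. of_nat (Suc k choose r) * y r) =
         (\<Sum>r\<le>k. of_nat (k choose r) * y r) + (\<Sum>r\<le>k. of_nat (k choose r) * y (Suc r))"
proof -
  have shift: "(\<Sum>r\<le>k. of_nat (k choose r) * y r) = y 0 + (\<Sum>r\<le>k. of_nat (k choose Suc r) * y (Suc r))"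
  proof -
    have "(\<Sum>r\<le>k. of_nat (k choose r) * y r) = (\<Sum>r\<le>Suc k. of_nat (k choose r) * y r)"
      by (simp add: binomial_eq_0)
    also have "\<dots> = y 0 + (\<Sum>r\<le>k. of_nat (k choose Suc r) * y (Suc r))"
      by (simp only: sum.atMost_Suc_shift) simp
    finally show ?thesis .
  qed
  have "(\<Sum>r\<le>Suc k. of_nat (Suc k choose r) * y r) = y 0 + (\<Sum>r\<le>k. of_nat (Suc k choose Suc r) * y (Suc r))"
    by (simp only: sum.atMost_Suc_shift) simp
  also have "\<dots> = (y 0 + (\<Sum>r\<le>k. of_nat (k choose Suc r) * y (Suc r))) + (\<Sum>r\<le>k. of_nat (k choose r) * y (Suc r))"
    by (simp add: sum.distrib algebra_simps)
  finally show ?thesis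
    by (simp only: shift)
qed

lemma Tint_pow_binomial:
  "i < n \<Longrightarrow> (Tint n ^^ k) v i = (\<Sum>r\<le>k. int (k choose r) * v ((i + r) mod n))"
proof (induction k arbitrary: i)
  case (Suc k)
  have "(Tint n ^^ Suc k) v i = (Tint n ^^ k) v i + (Tint n ^^ k) v ((i + 1) mod n)"
    by (simp add: Tint_def)
  also have "\<dots> = (\<Sum>r\<le>k. int (k choose r) * v ((i + r) mod n))
                  + (\<Sum>r\<le>k. int (k choose r) * v ((i + Suc r) mod n))"
    using Suc by (simp add: mod_simps)
  also have "\<dots> = (\<Sum>r\<le>Suc k. int (Suc k choose r) * v ((i + r) mod n))"
    by (rule sum_choose_Suc[symmetric])
  finally show ?case .
qed simp

definition eventual_period :: "nat \<Rightarrow> nat \<Rightarrow> nat \<Rightarrow> bool" where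
  "eventual_period n m Q \<longleftrightarrow> (\<exists>N. \<forall>v. vcong n m ((Tint n ^^ (N + Q)) v) ((Tint n ^^ N) v))"

definition min_period :: "nat \<Rightarrow> nat \<Rightarrow> nat" where
  "min_period n m = (LEAST Q. 0 < Q \<and> eventual_period n m Q)"

lemma eventual_period_from:
  assumes "\<And>v. vcong n m ((Tint n ^^ (N + Q)) v) ((Tint n ^^ N) v)" and "N \<le> k"
  shows "vcong n m ((Tint n ^^ (k + Q)) v) ((Tint n ^^ k) v)"
proof -
  obtain d where "k = N + d"
    using \<open>N \<le> k\<close> by (metis le_add_diff_inverse)
  then show ?thesis
    using assms(1)[of "(Tint n ^^ d) v"] by (simp add: ac_simps)
qed

lemma eventual_period_eventually:
  "eventual_period n m Q \<Longrightarrow> \<exists>N. \<forall>k\<ge>N. \<forall>v. vcong n m ((Tint n ^^ (k + Q)) v) ((Tint n ^^ k) v)"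
  unfolding eventual_period_def using eventual_period_from by blast

lemma eventual_period_0 [simp]: "eventual_period n m 0"
  by (simp add: eventual_period_def)

lemma eventual_period_add:
  assumes "eventual_period n m Q" "eventual_period n m Q'"
  shows "eventual_period n m (Q + Q')"
proof -
  obtain N N' where
    N: "\<And>k v. N \<le> k \<Longrightarrow> vcong n m ((Tint n ^^ (k + Q)) v) ((Tint n ^^ k) v)" and
    N': "\<And>k v. N' \<le> k \<Longrightarrow> vcong n m ((Tint n ^^ (k + Q')) v) ((Tint n ^^ k) v)"
    using assms by (meson eventual_period_eventually)
  have "vcong n m ((Tint n ^^ (N + N' + (Q + Q'))) v) ((Tint n ^^ (N + N')) v)" for v
  proof -
    have "vcong n m ((Tint n ^^ ((N + N' + Q') + Q)) v) ((Tint n ^^ (N + N' + Q')) v)"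
      by (rule N) simp
    also have "vcong n m \<dots> ((Tint n ^^ (N + N')) v)"
      by (rule N') simp
    finally show ?thesis
      by (simp add: ac_simps)
  qed
  then show ?thesis
    unfolding eventual_period_def by blast
qed

lemma eventual_period_mult: "eventual_period n m Q \<Longrightarrow> eventual_period n m (c * Q)"
  by (induction c) (simp_all add: eventual_period_add)

lemma eventual_period_diff:
  assumes "eventual_period n m Q" "eventual_period n m Q'" "Q' \<le> Q"
  shows "eventual_period n m (Q - Q')"
proof -
  obtain N N' where
    N: "\<And>k v. N \<le> k \<Longrightarrow> vcong n m ((Tint n ^^ (k + Q)) v) ((Tint n ^^ k) v)" and
    N': "\<And>k v. N' \<le> k \<Longrightarrow> vcong n m ((Tint n ^^ (k + Q')) v) ((Tint n ^^ k) v)"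
    using assms(1,2) by (meson eventual_period_eventually)
  have "vcong n m ((Tint n ^^ (N + N' + (Q - Q'))) v) ((Tint n ^^ (N + N')) v)" for v
  proof -
    have "vcong n m ((Tint n ^^ (N + N' + (Q - Q'))) v) ((Tint n ^^ ((N + N' + (Q - Q')) + Q')) v)"
      by (rule vcong_sym, rule N') simp
    also have "(Tint n ^^ ((N + N' + (Q - Q')) + Q')) v = (Tint n ^^ ((N + N') + Q)) v"
      using \<open>Q' \<le> Q\<close> by simp
    also have "vcong n m \<dots> ((Tint n ^^ (N + N')) v)"
      by (rule N) simp
    finally show ?thesis .
  qed
  then show ?thesis
    unfolding eventual_period_def by blast
qed

lemma min_period:
  assumes "eventual_period n m Q" "0 < Q"
  shows min_period_pos: "0 < min_period n m"
    and eventual_period_min_period: "eventual_period n m (min_period n m)"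
  using LeastI[of "\<lambda>Q. 0 < Q \<and> eventual_period n m Q" Q] assms
  by (simp_all add: min_period_def)

lemma min_period_le: "0 < Q \<Longrightarrow> eventual_period n m Q \<Longrightarrow> min_period n m \<le> Q"
  unfolding min_period_def by (simp add: Least_le)

lemma min_period_dvd:
  assumes "eventual_period n m Q"
  shows "min_period n m dvd Q"
proof (cases "Q = 0")
  case False
  let ?P = "min_period n m"
  have P: "0 < ?P" "eventual_period n m ?P"
    using min_period[OF assms] False by simp_all
  have "eventual_period n m (Q - Q div ?P * ?P)"
    using assms P(2) by (simp add: eventual_period_diff eventual_period_mult)
  then have "eventual_period n m (Q mod ?P)"
    by (simp add: minus_div_mult_eq_mod)
  moreover have "Q mod ?P < ?P"
    using P(1) by simp
  ultimately have "\<not> 0 < Q mod ?P"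
    using min_period_le by fastforce
  then show ?thesis
    by (simp add: dvd_eq_mod_eq_0)
qed simp

lemma eventual_period_dvd_modulus:
  "eventual_period n m Q \<Longrightarrow> d dvd m \<Longrightarrow> eventual_period n d Q"
  unfolding eventual_period_def by (meson vcong_dvd_modulus)

lemma Tint_pow_vcong_mult_exponent:
  assumes "\<And>v. vcong n m ((Tint n ^^ a) v) ((Tint n ^^ b) v)"
  shows "vcong n m ((Tint n ^^ (a * l)) v) ((Tint n ^^ (b * l)) v)"
proof (induction l arbitrary: v)
  case (Suc l)
  have "vcong n m ((Tint n ^^ (a + a * l)) v) ((Tint n ^^ (a * l + b)) v)"
    using assms[of "(Tint n ^^ (a * l)) v"] by (simp add: add.commute)
  also have "vcong n m ((Tint n ^^ (a * l + b)) v) ((Tint n ^^ (b * l + b)) v)"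
    using Suc.IH[of "(Tint n ^^ b) v"] by simp
  finally show ?case
    by (simp add: add.commute)
qed simp

lemma Tint_pow_vcong_scaled:
  assumes "\<And>v. vcong n m ((Tint n ^^ a) v) ((Tint n ^^ b) v)" and "\<forall>i<n. int d dvd u i"
  shows "vcong n (d * m) ((Tint n ^^ a) u) ((Tint n ^^ b) u)"
proof -
  define z where "z i = u i div int d" for i
  have u: "\<forall>i<n. u i = int d * z i"
    using assms(2) by (simp add: z_def)
  have scaled: "(Tint n ^^ k) u i = int d * (Tint n ^^ k) z i" if "i < n" for k i
    using Tint_pow_eq_on[OF u that] by (simp add: Tint_pow_scale)
  show ?thesis
    using assms(1)[of z] unfolding vcong_def
    by (simp add: scaled cong_iff_dvd_diff mult_dvd_mono flip: right_diff_distrib)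
qed

(* A^p - B^p = (A - B) (\<Sum>l<p. A^l B^(p-1-l)) for the commuting operators A = T^a, B = T^b. *)
lemma Tint_pow_power_diff:
  fixes a b p n :: nat and v :: "nat \<Rightarrow> int"
  defines "W \<equiv> \<lambda>i. \<Sum>l<p. (Tint n ^^ (a * l + b * (p - 1 - l))) v i"
  shows "(Tint n ^^ a) W i - (Tint n ^^ b) W i = (Tint n ^^ (a * p)) v i - (Tint n ^^ (b * p)) v i"
proof -
  define f where "f l = (Tint n ^^ (a * l + b * (p - l))) v i" for l
  have shifted: "(Tint n ^^ a) ((Tint n ^^ (a * l + b * (p - 1 - l))) v) i = f (Suc l)"
    "(Tint n ^^ b) ((Tint n ^^ (a * l + b * (p - 1 - l))) v) i = f l" if "l < p" for l
  proof -
    have "a + (a * l + b * (p - 1 - l)) = a * Suc l + b * (p - Suc l)"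
      by simp
    moreover have "b + (a * l + b * (p - 1 - l)) = a * l + b * (p - l)"
      using that by (simp add: Suc_diff_Suc flip: mult_Suc_right)
    ultimately show "(Tint n ^^ a) ((Tint n ^^ (a * l + b * (p - 1 - l))) v) i = f (Suc l)"
      "(Tint n ^^ b) ((Tint n ^^ (a * l + b * (p - 1 - l))) v) i = f l"
      by (simp_all only: f_def Tint_pow_pow)
  qed
  have "(Tint n ^^ a) W i - (Tint n ^^ b) W i = (\<Sum>l<p. f (Suc l) - f l)"
    unfolding W_def Tint_pow_sum using shifted by (simp add: sum_subtractf)
  also have "\<dots> = f p - f 0"
    by (rule sum_lessThan_telescope)
  finally show ?thesis
    by (simp add: f_def mult.commute)
qed

(* In the factorisation above, each A^l B^(p-1-l) v agrees with B^(p-1) v modulo p, so the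
   second factor is divisible by p. *)
lemma Tint_pow_vcong_power:
  assumes "\<And>v. vcong n m ((Tint n ^^ a) v) ((Tint n ^^ b) v)" and "p dvd m"
  shows "vcong n (p * m) ((Tint n ^^ (a * p)) v) ((Tint n ^^ (b * p)) v)"
proof -
  define W where "W i = (\<Sum>l<p. (Tint n ^^ (a * l + b * (p - 1 - l))) v i)" for i
  have summand: "vcong n p ((Tint n ^^ (a * l + b * (p - 1 - l))) v) ((Tint n ^^ (b * (p - 1))) v)"
    if "l < p" for l
  proof -
    have "vcong n m ((Tint n ^^ (a * l)) ((Tint n ^^ (b * (p - 1 - l))) v))
                    ((Tint n ^^ (b * l)) ((Tint n ^^ (b * (p - 1 - l))) v))"
      by (rule Tint_pow_vcong_mult_exponent[OF assms(1)])
    moreover have "b * l + b * (p - 1 - l) = b * (p - 1)"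
      using that by (simp flip: distrib_left)
    ultimately show ?thesis
      using \<open>p dvd m\<close> by (simp add: vcong_dvd_modulus)
  qed
  have "\<forall>i<n. int p dvd W i"
  proof (intro allI impI)
    fix i assume "i < n"
    let ?x = "(Tint n ^^ (b * (p - 1))) v i"
    have "[W i = (\<Sum>l<p. ?x)] (mod int p)"
      unfolding W_def using \<open>i < n\<close> summand by (intro cong_sum) (simp add: vcong_def)
    also have "[(\<Sum>l<p. ?x) = 0] (mod int p)"
      by (simp add: cong_mult_self_left)
    finally show "int p dvd W i"
      by (simp add: cong_0_iff)
  qed
  then have "vcong n (p * m) ((Tint n ^^ a) W) ((Tint n ^^ b) W)"
    by (rule Tint_pow_vcong_scaled[OF assms(1)])
  then show ?thesis
    using Tint_pow_power_diff[where a = a and b = b and p = p and n = n and v = v] unfolding vcong_def cong_iff_dvd_diff W_def by simp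
qed

lemma eventual_period_power:
  assumes "eventual_period n m Q" "p dvd m"
  shows "eventual_period n (p * m) (p * Q)"
proof -
  obtain N where "\<And>v. vcong n m ((Tint n ^^ (N + Q)) v) ((Tint n ^^ N) v)"
    using assms(1) unfolding eventual_period_def by blast
  then have "vcong n (p * m) ((Tint n ^^ ((N + Q) * p)) v) ((Tint n ^^ (N * p)) v)" for v
    using Tint_pow_vcong_power assms(2) by blast
  moreover have "(N + Q) * p = N * p + p * Q"
    by (simp add: algebra_simps)
  ultimately show ?thesis
    unfolding eventual_period_def by (intro exI[of _ "N * p"]) simp
qed

lemma eventual_period_two_power_cong:
  assumes "eventual_period n m Q" "coprime 2 m" "0 < n"
  shows "[2 ^ Q = 1] (mod m)"
proof -
  obtain N where "vcong n m ((Tint n ^^ (N + Q)) (\<lambda>_. 1)) ((Tint n ^^ N) (\<lambda>_. 1))"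
    using assms(1) unfolding eventual_period_def by blast
  then have "[2 ^ N * 2 ^ Q = 2 ^ N * 1] (mod int m)"
    using \<open>0 < n\<close> by (auto simp: vcong_def Tint_pow_const power_add)
  moreover have "coprime (2 ^ N) (int m)"
    using assms(2) by simp
  ultimately have "[2 ^ Q = 1] (mod int m)"
    using cong_mult_lcancel by blast
  then show ?thesis
    by (metis cong_int_iff of_nat_1 of_nat_numeral of_nat_power)
qed

(* Modulo p, T^(p^f) = 1 + S^(p^f) = 1 + S = T. *)
lemma eventual_period_frobenius:
  assumes "prime p" "0 < f" "[p ^ f = 1] (mod n)"
  shows "eventual_period n p (p ^ f - 1)"
proof -
  define K where "K = p ^ f"
  have "1 < K"
    unfolding K_def using prime_gt_1_nat[OF assms(1)] assms(2) by (rule one_less_power)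
  have "vcong n p ((Tint n ^^ K) v) (Tint n v)" for v
    unfolding vcong_def
  proof (intro allI impI)
    fix i assume "i < n"
    define y where "y r = v ((i + r) mod n)" for r
    have "[i + K = i + 1] (mod n)"
      using cong_add[OF cong_refl assms(3)] by (simp add: K_def)
    then have "y K = v ((i + 1) mod n)"
      by (simp add: y_def cong_def)
    have inner: "int p dvd (\<Sum>r\<in>{..K} - {0, K}. int (K choose r) * y r)"
    proof (rule dvd_sum)
      fix r assume "r \<in> {..K} - {0, K}"
      then have "p dvd (K choose r)"
        unfolding K_def by (intro prime_dvd_choose_prime_power[OF \<open>prime p\<close>]) auto
      then show "int p dvd int (K choose r) * y r"
        by simp
    qed
    have "(Tint n ^^ K) v i = (\<Sum>r\<le>K. int (K choose r) * y r)"
      using Tint_pow_binomial[OF \<open>i < n\<close>] by (simp add: y_def)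
    also have "\<dots> = (\<Sum>r\<in>{..K} - {0, K}. int (K choose r) * y r) + (\<Sum>r\<in>{0, K}. int (K choose r) * y r)"
      by (rule sum.subset_diff) auto
    also have "(\<Sum>r\<in>{0, K}. int (K choose r) * y r) = Tint n v i"
      using \<open>1 < K\<close> \<open>y K = v ((i + 1) mod n)\<close> \<open>i < n\<close> by (simp add: y_def Tint_def)
    finally show "[(Tint n ^^ K) v i = Tint n v i] (mod int p)"
      using inner by (simp add: cong_iff_dvd_diff)
  qed
  then have "vcong n p ((Tint n ^^ (1 + (K - 1))) v) ((Tint n ^^ 1) v)" for v
    using \<open>1 < K\<close> by simp
  then show ?thesis
    unfolding eventual_period_def K_def by blast
qed

lemma eventual_period_coprime_to_prime:
  fixes p n :: nat
  assumes "prime p" "0 < n" "\<not> p dvd n"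
  obtains K where "eventual_period n p K" "0 < K" "\<not> p dvd K"
proof
  define f where "f = totient n"
  have "0 < f"
    using \<open>0 < n\<close> by (simp add: f_def)
  then have "1 < p ^ f"
    using prime_gt_1_nat[OF assms(1)] by (rule one_less_power[rotated])
  show "eventual_period n p (p ^ f - 1)"
    using eventual_period_frobenius[OF assms(1) \<open>0 < f\<close>] euler_theorem[of p n]
      prime_imp_coprime[OF assms(1,3)] by (simp add: f_def)
  show "0 < p ^ f - 1"
    using \<open>1 < p ^ f\<close> by simp
  show "\<not> p dvd p ^ f - 1"
  proof
    assume "p dvd p ^ f - 1"
    moreover have "p dvd p ^ f"
      using \<open>0 < f\<close> by simp
    ultimately have "p dvd 1"
      using \<open>1 < p ^ f\<close> by (metis dvd_diff_nat diff_diff_cancel less_imp_le)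
    then show False
      using assms(1) by simp
  qed
qed

lemma eventual_period_prime_power:
  "eventual_period n p K \<Longrightarrow> eventual_period n (p ^ Suc j) (p ^ j * K)"
proof (induction j)
  case (Suc j)
  then have "eventual_period n (p * p ^ Suc j) (p * (p ^ j * K))"
    by (intro eventual_period_power) simp_all
  then show ?case
    by (simp add: mult.assoc)
qed simp

lemma Tmap_zvecs: "0 < m \<Longrightarrow> Tmap m n a \<in> zvecs m n"
  by (simp add: Tmap_def zvecs_def)

lemma Tmap_funpow_zvecs: "0 < m \<Longrightarrow> a \<in> zvecs m n \<Longrightarrow> (Tmap m n ^^ k) a \<in> zvecs m n"
  by (induction k) (simp_all add: Tmap_zvecs)

lemma zvecs_eq_iff:
  assumes "a \<in> zvecs m n" "b \<in> zvecs m n"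
  shows "a = b \<longleftrightarrow> (\<forall>i<n. a i = b i)"
proof (intro iffI ext)
  fix i assume "\<forall>i<n. a i = b i"
  then show "a i = b i"
    using assms by (cases "i < n") (simp_all add: zvecs_def)
qed simp

lemma Tmap_funpow_int:
  assumes "0 < m" "a \<in> zvecs m n" "i < n"
  shows "int ((Tmap m n ^^ k) a i) = (Tint n ^^ k) (\<lambda>j. int (a j)) i mod int m"
  using \<open>i < n\<close>
proof (induction k arbitrary: i)
  case 0
  then show ?case
    using assms(2) by (simp add: zvecs_def)
next
  case (Suc k)
  then have "(i + 1) mod n < n"
    by simp
  with Suc show ?case
    by (simp add: Tmap_def Tint_def of_nat_mod mod_add_eq)
qed

lemma Tmap_funpow_eq_iff:
  assumes "0 < m" "a \<in> zvecs m n"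
  shows "(Tmap m n ^^ k) a = (Tmap m n ^^ l) a \<longleftrightarrow>
         vcong n m ((Tint n ^^ k) (\<lambda>j. int (a j))) ((Tint n ^^ l) (\<lambda>j. int (a j)))"
proof -
  have "(Tmap m n ^^ k) a = (Tmap m n ^^ l) a \<longleftrightarrow> (\<forall>i<n. (Tmap m n ^^ k) a i = (Tmap m n ^^ l) a i)"
    using Tmap_funpow_zvecs[OF assms] by (intro zvecs_eq_iff)
  also have "\<dots> \<longleftrightarrow> (\<forall>i<n. int ((Tmap m n ^^ k) a i) = int ((Tmap m n ^^ l) a i))"
    by simp
  finally show ?thesis
    by (simp add: Tmap_funpow_int[OF assms] vcong_def cong_def)
qed

lemma Tmap_eventually_periodic:
  assumes "0 < m" "a \<in> zvecs m n" "eventual_period n m Q"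
  shows "\<exists>N. \<forall>k\<ge>N. (Tmap m n ^^ (k + Q)) a = (Tmap m n ^^ k) a"
proof -
  obtain N where "\<forall>k\<ge>N. \<forall>v. vcong n m ((Tint n ^^ (k + Q)) v) ((Tint n ^^ k) v)"
    using eventual_period_eventually[OF assms(3)] by blast
  then show ?thesis
    unfolding Tmap_funpow_eq_iff[OF assms(1,2)] by blast
qed

lemma cycle_length:
  assumes "0 < m" "a \<in> zvecs m n" "eventual_period n m Q" "0 < Q"
  shows cycle_length_pos: "0 < cycle_length m n a"
    and cycle_length_periodic:
      "\<exists>N. \<forall>k\<ge>N. (Tmap m n ^^ (k + cycle_length m n a)) a = (Tmap m n ^^ k) a"
    and cycle_length_le: "cycle_length m n a \<le> Q"
proof -
  have Q: "0 < Q \<and> (\<exists>N. \<forall>k\<ge>N. (Tmap m n ^^ (k + Q)) a = (Tmap m n ^^ k) a)"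
    using assms Tmap_eventually_periodic by blast
  then have "0 < cycle_length m n a \<and>
      (\<exists>N. \<forall>k\<ge>N. (Tmap m n ^^ (k + cycle_length m n a)) a = (Tmap m n ^^ k) a)"
    unfolding cycle_length_def by (rule LeastI)
  then show "0 < cycle_length m n a"
    and "\<exists>N. \<forall>k\<ge>N. (Tmap m n ^^ (k + cycle_length m n a)) a = (Tmap m n ^^ k) a"
    by blast+
  show "cycle_length m n a \<le> Q"
    unfolding cycle_length_def using Q by (rule Least_le)
qed

lemma finite_zvecs: "finite (zvecs m n)"
proof -
  have "zvecs m n = {f. \<forall>x. (x \<in> {..<n} \<longrightarrow> f x \<in> {..<m}) \<and> (x \<notin> {..<n} \<longrightarrow> f x = 0)}"
    unfolding zvecs_def by (simp add: all_conj_distrib not_less)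
  also have "finite \<dots>"
    by (rule finite_set_of_finite_funs) simp_all
  finally show ?thesis .
qed

lemma rotate_index_eq_0_iff:
  fixes i j n :: nat
  assumes "i < n" "j < n"
  shows "(i + (n - j)) mod n = 0 \<longleftrightarrow> i = j"
proof (cases "j \<le> i")
  case True
  then have "i + (n - j) = (i - j) + n"
    using \<open>j < n\<close> by arith
  then have "(i + (n - j)) mod n = (i - j + n) mod n"
    by (simp only:)
  also have "\<dots> = i - j"
    using \<open>i < n\<close> by simp
  finally show ?thesis
    using True by arith
next
  case False
  then have "0 < i + (n - j)" "i + (n - j) < n"
    using \<open>j < n\<close> by arith+
  then have "(i + (n - j)) mod n \<noteq> 0"
    by (simp only: mod_less)
  moreover have "i \<noteq> j"
    using False by simp
  ultimately show ?thesis
    by blast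
qed

lemma Tint_pow_convolution:
  assumes "i < n"
  shows "(Tint n ^^ k) v i = (\<Sum>j<n. v j * (Tint n ^^ k) (\<lambda>i. of_bool (i = 0)) ((i + (n - j)) mod n))"
proof -
  let ?\<delta> = "\<lambda>i. of_bool (i = 0) :: int"
  have "v i' = (\<Sum>j<n. v j * ?\<delta> ((i' + (n - j)) mod n))" if "i' < n" for i'
  proof -
    have "(\<Sum>j<n. v j * ?\<delta> ((i' + (n - j)) mod n)) = (\<Sum>j<n. if i' = j then v j else 0)"
    proof (intro sum.cong refl)
      fix j assume "j \<in> {..<n}"
      then show "v j * ?\<delta> ((i' + (n - j)) mod n) = (if i' = j then v j else 0)"
        using rotate_index_eq_0_iff[OF that, of j] by simp
    qed
    also have "\<dots> = v i'"
      using that by simp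
    finally show ?thesis ..
  qed
  then have "(Tint n ^^ k) v i = (Tint n ^^ k) (\<lambda>i. \<Sum>j<n. v j * ?\<delta> ((i + (n - j)) mod n)) i"
    using assms by (intro Tint_pow_eq_on) blast+
  also have "\<dots> = (\<Sum>j<n. v j * (Tint n ^^ k) (\<lambda>i. ?\<delta> ((i + (n - j)) mod n)) i)"
    by (simp only: Tint_pow_sum Tint_pow_scale)
  also have "\<dots> = (\<Sum>j<n. v j * (Tint n ^^ k) ?\<delta> ((i + (n - j)) mod n))"
  proof (rule sum.cong[OF refl])
    fix j
    show "v j * (Tint n ^^ k) (\<lambda>i. ?\<delta> ((i + (n - j)) mod n)) i = v j * (Tint n ^^ k) ?\<delta> ((i + (n - j)) mod n)"
      using Tint_pow_rotate[OF assms, of k ?\<delta> "n - j"] by simp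
  qed
  finally show ?thesis .
qed

lemma eventual_period_cycle_length_unit:
  assumes "1 < m" "0 < n" "eventual_period n m Q" "0 < Q"
  shows "eventual_period n m (cycle_length m n (\<lambda>i. of_bool (i = 0)))"
proof -
  let ?e = "\<lambda>i. of_bool (i = 0) :: nat"
  let ?C = "cycle_length m n ?e"
  have e: "?e \<in> zvecs m n"
    using assms(1,2) by (simp add: zvecs_def)
  obtain N where "(Tmap m n ^^ (N + ?C)) ?e = (Tmap m n ^^ N) ?e"
    using cycle_length_periodic[OF _ e assms(3,4)] assms(1) by auto
  then have unit: "vcong n m ((Tint n ^^ (N + ?C)) (\<lambda>i. of_bool (i = 0))) ((Tint n ^^ N) (\<lambda>i. of_bool (i = 0)))"
    using Tmap_funpow_eq_iff[OF _ e] assms(1) by simp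
  have "vcong n m ((Tint n ^^ (N + ?C)) v) ((Tint n ^^ N) v)" for v
    unfolding vcong_def
  proof (intro allI impI)
    fix i assume "i < n"
    have "(i + (n - j)) mod n < n" for j
      using \<open>0 < n\<close> by simp
    then show "[(Tint n ^^ (N + ?C)) v i = (Tint n ^^ N) v i] (mod int m)"
      using unit unfolding Tint_pow_convolution[OF \<open>i < n\<close>] vcong_def
      by (intro cong_sum cong_scalar_left) blast
  qed
  then show ?thesis
    unfolding eventual_period_def by blast
qed

lemma Pmax_eq_min_period:
  assumes "1 < m" "0 < n" "eventual_period n m Q" "0 < Q"
  shows "Pmax m n = min_period n m"
proof -
  let ?e = "\<lambda>i. of_bool (i = 0) :: nat"
  have m: "0 < m"
    using assms(1) by simp
  have P: "0 < min_period n m" "eventual_period n m (min_period n m)"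
    using min_period[OF assms(3,4)] by simp_all
  have e: "?e \<in> zvecs m n"
    using assms(1,2) by (simp add: zvecs_def)
  have "cycle_length m n ?e = min_period n m"
  proof (rule antisym)
    show "cycle_length m n ?e \<le> min_period n m"
      using cycle_length_le[OF m e P(2,1)] .
    show "min_period n m \<le> cycle_length m n ?e"
      using min_period_le[OF cycle_length_pos[OF m e assms(3,4)] eventual_period_cycle_length_unit[OF assms]] .
  qed
  then have "min_period n m \<in> cycle_length m n ` zvecs m n"
    using e by (metis image_eqI)
  moreover have "cycle_length m n a \<le> min_period n m" if "a \<in> zvecs m n" for a
    using cycle_length_le[OF m that P(2,1)] .
  ultimately show ?thesis
    unfolding Pmax_def using finite_zvecs by (intro Max_eqI) auto
qed

lemma min_period_prime_power_Suc:
  fixes p n j Q :: nat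
  assumes "prime p" "odd p" "0 < n" "0 < j" "eventual_period n (p ^ j) Q" "0 < Q"
    and "\<not> [2 ^ min_period n (p ^ j) = 1] (mod p ^ Suc j)"
  shows "min_period n (p ^ Suc j) = p * min_period n (p ^ j)"
proof -
  let ?P = "min_period n (p ^ j)" and ?P' = "min_period n (p ^ Suc j)"
  have P: "0 < ?P" "eventual_period n (p ^ j) ?P"
    using min_period[OF assms(5,6)] by simp_all
  have lifted: "eventual_period n (p ^ Suc j) (p * ?P)"
    using eventual_period_power[OF P(2), of p] \<open>0 < j\<close> by simp
  have P': "eventual_period n (p ^ Suc j) ?P'"
    using min_period[OF lifted] P(1) prime_gt_0_nat[OF assms(1)] by simp
  have "?P dvd ?P'"
    using eventual_period_dvd_modulus[OF P', of "p ^ j"] by (simp add: min_period_dvd)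
  then obtain c where c: "?P' = ?P * c"
    by (elim dvdE)
  moreover have "?P' dvd p * ?P"
    using lifted by (rule min_period_dvd)
  ultimately have "c dvd p"
    using P(1) by (simp add: mult.commute)
  then have "c = 1 \<or> c = p"
    using assms(1) by (simp add: prime_nat_iff)
  moreover have "c \<noteq> 1"
  proof
    assume "c = 1"
    then have "[2 ^ ?P = 1] (mod p ^ Suc j)"
      using eventual_period_two_power_cong[OF P'] c assms(2,3) by simp
    with assms(7) show False ..
  qed
  ultimately show ?thesis
    using c by simp
qed

theorem proposition5p3:
  fixes p n :: nat
  assumes "prime p" and "p > 2" and "\<not> wieferich p"
    and "n > 0" and "\<not> p dvd n"
  shows "Pmax (p ^ 2) n = p * Pmax p n \<and> Pmax (p ^ 3) n = p ^ 2 * Pmax p n"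
proof -
  have odd: "odd p"
    using assms(1,2) by (rule prime_odd_nat)
  obtain K where K: "eventual_period n p K" "0 < K" "\<not> p dvd K"
    using eventual_period_coprime_to_prime assms(1,4,5) by blast
  define P where "P = min_period n p"
  have "\<not> p dvd P"
    using min_period_dvd[OF K(1)] K(3) unfolding P_def by (meson dvd_trans)
  have per: "eventual_period n (p ^ Suc j) (p ^ j * K)" "0 < p ^ j * K" for j
    using eventual_period_prime_power[OF K(1)] K(2) prime_gt_0_nat[OF assms(1)] by simp_all
  have P2: "min_period n (p ^ 2) = p * P"
    using min_period_prime_power_Suc[OF assms(1) odd assms(4) _ per[of 0]]
      non_wieferich_two_power_not_cong_one[OF assms(1) odd assms(3) \<open>\<not> p dvd P\<close>, of 0]
    by (simp add: P_def numeral_2_eq_2)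
  have P3: "min_period n (p ^ 3) = p ^ 2 * P"
    using min_period_prime_power_Suc[OF assms(1) odd assms(4) _ per[of 1]]
      non_wieferich_two_power_not_cong_one[OF assms(1) odd assms(3) \<open>\<not> p dvd P\<close>, of 1] P2
    by (simp add: numeral_3_eq_3 power2_eq_square)
  have "Pmax (p ^ Suc j) n = min_period n (p ^ Suc j)" for j
    using one_less_power[OF prime_gt_1_nat[OF assms(1)], of "Suc j"]
    by (intro Pmax_eq_min_period[OF _ assms(4) per]) simp_all
  from this[of 0] this[of 1] this[of 2] show ?thesis
    using P2 P3 by (simp add: P_def numeral_2_eq_2 numeral_3_eq_3)
qed

end
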